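(* Let $n\geq 1$ and let $p,q,t,x$ be indeterminates. Define $$A_n(p,q,t)=\sum_{\sigma\in\mathfrak{S}_n}p^{\mathsf{nest}\,\sigma}q^{\mathsf{cros}\,\sigma}t^{\mathsf{exc}\,\sigma}.$$ Then $$A_{n}(p, q, t)=\left(\frac{1+xt}{1+x}\right)^{n-1}P^{(\mathsf{nest}, \mathsf{cros},\mathsf{cpk}^*,\mathsf{exc})}\left(\mathfrak{S}_n; p, q, \frac{(1+x)^{2}t}{(x+t)(1+xt)},\frac{x+t}{1+xt}\right),$$ equivalently, $$P^{(\mathsf{nest}, \mathsf{cros}, \mathsf{cpk}^*,\mathsf{exc})}(\mathfrak{S}_n; p, q, x,t)=\left(\frac{1+u}{1+uv}\right)^{n-1}A_{n}(p, q, v),$$ where $u=\frac{1+t^{2}-2xt-(1-t)\sqrt{(1+t)^{2}-4xt}}{2(1-x)t}$ and $v=\frac{(1+t)^{2}-2xt-(1+t)\sqrt{(1+t)^{2}-4xt}}{2xt}$.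
   Context: $\mathfrak{S}_n$ is the set of permutations of $[n]=\{1,\dots,n\}$. For a finite set $\Omega$ of permutations and statistics $\mathsf{stat}_1,\dots,\mathsf{stat}_m$, $P^{(\mathsf{stat}_1,\ldots,\mathsf{stat}_m)}(\Omega;t_1,\ldots,t_m)=\sum_{\sigma\in\Omega}t_1^{\mathsf{stat}_1\sigma}\cdots t_m^{\mathsf{stat}_m\sigma}$. For $\sigma\in\mathfrak{S}_n$: $\mathsf{exc}\,\sigma=\#\{i:\sigma(i)>i\}$; for $i\in[n]$, $\mathsf{nest}_i\sigma=\#\{j: j<i<\sigma(i)<\sigma(j)\text{ or }\sigma(j)<\sigma(i)\le i<j\}$ and $\mathsf{cros}_i\sigma=\#\{j: j<i<\sigma(j)<\sigma(i)\text{ or }\sigma(i)<\sigma(j)\le i<j\}$; $\mathsf{nest}=\sum_i\mathsf{nest}_i$, $\mathsf{cros}=\sum_i\mathsf{cros}_i$. The star companion $\sigma^*$ is the permutation of $\{0,1,\dots,n\}$ with $\sigma^*(0)=n$ and $\sigma^*(i)=\sigma(i)-1$ for $i\in[n]$. Then $\mathsf{cpk}^*\sigma=\#\{i\in[n-1]:(\sigma^* )^{-1}(i)<i>\sigma^*(i)\}$. *)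

theory Defs
  imports "HOL-Combinatorics.Permutations"
begin

definition Sym :: "nat \<Rightarrow> (nat \<Rightarrow> nat) set" where
  "Sym n = {\<sigma>. \<sigma> permutes {1..n}}"

definition exc :: "nat \<Rightarrow> (nat \<Rightarrow> nat) \<Rightarrow> nat" where
  "exc n \<sigma> = card {i \<in> {1..n}. \<sigma> i > i}"

definition nest_i :: "nat \<Rightarrow> (nat \<Rightarrow> nat) \<Rightarrow> nat \<Rightarrow> nat" where
  "nest_i n \<sigma> i = card {j \<in> {1..n}.
      (j < i \<and> i < \<sigma> i \<and> \<sigma> i < \<sigma> j) \<or> (\<sigma> j < \<sigma> i \<and> \<sigma> i \<le> i \<and> i < j)}"

definition cros_i :: "nat \<Rightarrow> (nat \<Rightarrow> nat) \<Rightarrow> nat \<Rightarrow> nat" where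
  "cros_i n \<sigma> i = card {j \<in> {1..n}.
      (j < i \<and> i < \<sigma> j \<and> \<sigma> j < \<sigma> i) \<or> (\<sigma> i < \<sigma> j \<and> \<sigma> j \<le> i \<and> i < j)}"

definition nest :: "nat \<Rightarrow> (nat \<Rightarrow> nat) \<Rightarrow> nat" where
  "nest n \<sigma> = (\<Sum>i\<in>{1..n}. nest_i n \<sigma> i)"

definition cros :: "nat \<Rightarrow> (nat \<Rightarrow> nat) \<Rightarrow> nat" where
  "cros n \<sigma> = (\<Sum>i\<in>{1..n}. cros_i n \<sigma> i)"

definition star_comp :: "nat \<Rightarrow> (nat \<Rightarrow> nat) \<Rightarrow> nat \<Rightarrow> nat" where
  "star_comp n \<sigma> = (\<lambda>i. if i = 0 then n else \<sigma> i - 1)"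

definition cpk_star :: "nat \<Rightarrow> (nat \<Rightarrow> nat) \<Rightarrow> nat" where
  "cpk_star n \<sigma> = card {i \<in> {1..n-1}.
      inv_into {0..n} (star_comp n \<sigma>) i < i \<and> star_comp n \<sigma> i < i}"

definition A_poly :: "nat \<Rightarrow> 'a::comm_semiring_1 \<Rightarrow> 'a \<Rightarrow> 'a \<Rightarrow> 'a" where
  "A_poly n p q t = (\<Sum>\<sigma>\<in>Sym n. p ^ nest n \<sigma> * q ^ cros n \<sigma> * t ^ exc n \<sigma>)"

definition P_nest_cros_cpk_exc :: "nat \<Rightarrow> 'a::comm_semiring_1 \<Rightarrow> 'a \<Rightarrow> 'a \<Rightarrow> 'a \<Rightarrow> 'a" where
  "P_nest_cros_cpk_exc n t1 t2 t3 t4 =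
     (\<Sum>\<sigma>\<in>Sym n. t1 ^ nest n \<sigma> * t2 ^ cros n \<sigma> * t3 ^ cpk_star n \<sigma> * t4 ^ exc n \<sigma>)"

end

theory Submission
  imports Defs
begin

text \<open>A permutation \<open>\<sigma>\<close> of \<open>{1..n}\<close> is determined by its excedance positions \<open>A\<close>, its
  excedance values \<open>B\<close> and two arc diagrams: the arcs \<open>(i, \<sigma> i)\<close> for \<open>i \<in> A\<close>, and the arcs
  \<open>(\<sigma> i, i + 1)\<close> for \<open>i \<notin> A\<close>.  Then \<open>nest\<close> and \<open>cros\<close> are the nestings and crossings of the
  two diagrams, \<open>exc = |A|\<close>, and \<open>cpk\<^sup>*\<close> counts the \<open>i \<notin> A\<close> with \<open>i + 1 \<in> B\<close>.  Summing over
  the diagrams with given \<open>A\<close> and \<open>B\<close> yields a product of \<open>(p,q)\<close>-integers counting open arcs,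
  so the generating function becomes a sum over weighted Motzkin paths in which down steps
  carry \<open>s = t\<^sub>3\<close> and the steps in \<open>A\<close> carry \<open>y = t\<^sub>4\<close>.  Up to a factor \<open>r\<close> per step such a
  sum depends only on \<open>s y\<close> and \<open>1 + y\<close>, and the substitution of the theorem is exactly
  \<open>s y = r\<^sup>2 t\<close>, \<open>1 + y = r (1 + t)\<close> with \<open>r = (1 + x) / (1 + x t)\<close>.\<close>

section \<open>\<open>(p,q)\<close>-integers and weighted Motzkin paths\<close>

definition pq_int :: "'a::comm_semiring_1 \<Rightarrow> 'a \<Rightarrow> nat \<Rightarrow> 'a" where
  "pq_int p q k = (\<Sum>i<k. p ^ i * q ^ (k - 1 - i))"

lemma pq_int_0 [simp]: "pq_int p q 0 = 0"
  by (simp add: pq_int_def)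

lemma pq_int_Suc: "pq_int p q (Suc k) = p ^ k + q * pq_int p q k"
proof -
  have "pq_int p q (Suc k) = p ^ k + (\<Sum>i<k. p ^ i * q ^ (k - i))"
    by (simp add: pq_int_def add.commute)
  also have "(\<Sum>i<k. p ^ i * q ^ (k - i)) = q * pq_int p q k"
    unfolding pq_int_def sum_distrib_left
  proof (rule sum.cong)
    fix i assume "i \<in> {..<k}"
    then have "k - i = Suc (k - 1 - i)" by auto
    then show "p ^ i * q ^ (k - i) = q * (p ^ i * q ^ (k - 1 - i))"
      by (simp add: mult.left_commute)
  qed simp
  finally show ?thesis .
qed

lemma sum_rank_powers:
  fixes J :: "'b::linorder set" and p q :: "'a::comm_semiring_1"
  assumes "finite J"
  shows "(\<Sum>j\<in>J. p ^ card {x\<in>J. x < j} * q ^ card {x\<in>J. j < x}) = pq_int p q (card J)"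
  using assms
proof (induction J rule: finite_linorder_max_induct)
  case empty
  then show ?case by simp
next
  case (insert b A)
  have top: "{x \<in> insert b A. x < b} = A" "{x \<in> insert b A. b < x} = {}"
    using insert.hyps by auto
  have b_new: "b \<notin> A" using insert.hyps by auto
  have rest: "p ^ card {x \<in> insert b A. x < j} * q ^ card {x \<in> insert b A. j < x}
      = q * (p ^ card {x\<in>A. x < j} * q ^ card {x\<in>A. j < x})" if "j \<in> A" for j
  proof -
    have "{x \<in> insert b A. x < j} = {x\<in>A. x < j}" "{x \<in> insert b A. j < x} = insert b {x\<in>A. j < x}"
      using that insert.hyps by auto
    then show ?thesis using insert.hyps b_new by (simp add: mult.left_commute)
  qed
  have "(\<Sum>j\<in>insert b A. p ^ card {x \<in> insert b A. x < j} * q ^ card {x \<in> insert b A. j < x})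
      = p ^ card A + q * (\<Sum>j\<in>A. p ^ card {x\<in>A. x < j} * q ^ card {x\<in>A. j < x})"
    unfolding sum.insert[OF insert.hyps(1) b_new] top sum_distrib_left
    using rest by simp
  then show ?case
    using insert.hyps b_new by (simp add: insert.IH pq_int_Suc)
qed

text \<open>\<open>motzkin_sum p q s y m D\<close> is the total weight of Motzkin paths of length \<open>m\<close> from
  height \<open>0\<close> to height \<open>D\<close>, where a level step at height \<open>h\<close> weighs \<open>(1 + y)[h+1]\<close>, an
  up step weighs \<open>y\<close> and a down step from height \<open>h+1\<close> weighs \<open>s[h+1][h+2]\<close>, with
  \<open>[k] = pq_int p q k\<close>.\<close>
fun motzkin_sum :: "'a::comm_semiring_1 \<Rightarrow> 'a \<Rightarrow> 'a \<Rightarrow> 'a \<Rightarrow> nat \<Rightarrow> nat \<Rightarrow> 'a" where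
  "motzkin_sum p q s y 0 D = (if D = 0 then 1 else 0)"
| "motzkin_sum p q s y (Suc m) D =
     (1 + y) * pq_int p q (D + 1) * motzkin_sum p q s y m D
     + (if 0 < D then y * motzkin_sum p q s y m (D - 1) else 0)
     + s * pq_int p q (D + 1) * pq_int p q (D + 2) * motzkin_sum p q s y m (D + 1)"

text \<open>Attaching \<open>s\<close> to down steps and \<open>y\<close> to up steps only matters through the product
  \<open>s y\<close> of a matched pair; together with the level weight \<open>1 + y\<close> this is rescaled uniformly.\<close>
lemma motzkin_sum_rescale:
  fixes p q s y r t :: "'a::comm_semiring_1"
  assumes up_down: "s * y = r\<^sup>2 * t" and level: "1 + y = r * (1 + t)"
  shows "s ^ D * motzkin_sum p q s y m D = r ^ (m + D) * motzkin_sum p q 1 t m D"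
proof (induction m arbitrary: D)
  case 0
  then show ?case by simp
next
  case (Suc m)
  let ?M = "motzkin_sum p q s y m" and ?M' = "motzkin_sum p q 1 t m"
  have level_steps: "s ^ D * ((1 + y) * pq_int p q (D + 1) * ?M D)
      = r ^ (Suc m + D) * ((1 + t) * pq_int p q (D + 1) * ?M' D)"
  proof -
    have "s ^ D * ((1 + y) * pq_int p q (D + 1) * ?M D)
        = (1 + y) * pq_int p q (D + 1) * (s ^ D * ?M D)"
      by (simp only: ac_simps)
    also have "\<dots> = r * (1 + t) * pq_int p q (D + 1) * (r ^ (m + D) * ?M' D)"
      by (simp only: Suc.IH level)
    finally show ?thesis by (simp add: ac_simps)
  qed
  have up_steps: "s ^ D * (if 0 < D then y * ?M (D - 1) else 0)
      = r ^ (Suc m + D) * (if 0 < D then t * ?M' (D - 1) else 0)"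
  proof (cases D)
    case (Suc d)
    have "s ^ D * (y * ?M d) = (s * y) * (s ^ d * ?M d)"
      using Suc by (simp add: ac_simps)
    also have "\<dots> = r ^ (Suc m + D) * (t * ?M' d)"
      using Suc by (simp add: Suc.IH up_down power2_eq_square ac_simps)
    finally show ?thesis using Suc by simp
  qed simp
  have down_steps: "s ^ D * (s * pq_int p q (D + 1) * pq_int p q (D + 2) * ?M (D + 1))
      = r ^ (Suc m + D) * (1 * pq_int p q (D + 1) * pq_int p q (D + 2) * ?M' (D + 1))"
  proof -
    have "s ^ D * (s * pq_int p q (D + 1) * pq_int p q (D + 2) * ?M (D + 1))
        = pq_int p q (D + 1) * pq_int p q (D + 2) * (s ^ (D + 1) * ?M (D + 1))"
      by (simp add: ac_simps)
    also have "\<dots> = pq_int p q (D + 1) * pq_int p q (D + 2) * (r ^ (m + (D + 1)) * ?M' (D + 1))"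
      by (simp only: Suc.IH)
    finally show ?thesis by (simp add: ac_simps)
  qed
  show ?case
    using level_steps up_steps down_steps by (simp only: motzkin_sum.simps distrib_left)
qed

section \<open>Arc diagrams\<close>

text \<open>Arcs \<open>(j, f j)\<close> joining each opener \<open>j \<in> A\<close> to a closer \<open>f j \<in> B\<close> on its right;
  the map is normalised to \<open>0\<close> off \<open>A\<close>, so it is determined by its values on \<open>A\<close>.\<close>
definition arc_maps :: "nat set \<Rightarrow> nat set \<Rightarrow> (nat \<Rightarrow> nat) set" where
  "arc_maps A B = {f. bij_betw f A B \<and> (\<forall>j\<in>A. j < f j) \<and> (\<forall>j. j \<notin> A \<longrightarrow> f j = 0)}"

definition arc_nest :: "nat set \<Rightarrow> (nat \<Rightarrow> nat) \<Rightarrow> nat" where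
  "arc_nest A f = card {(i, j). i \<in> A \<and> j \<in> A \<and> j < i \<and> f i < f j}"

definition arc_cros :: "nat set \<Rightarrow> (nat \<Rightarrow> nat) \<Rightarrow> nat" where
  "arc_cros A f = card {(i, j). i \<in> A \<and> j \<in> A \<and> j < i \<and> i < f j \<and> f j < f i}"

definition open_arcs :: "nat set \<Rightarrow> nat set \<Rightarrow> nat \<Rightarrow> nat" where
  "open_arcs A B v = card {a\<in>A. a < v} - card {b\<in>B. b < v}"

lemma arc_maps_finite:
  assumes "finite A" "finite B"
  shows "finite (arc_maps A B)"
proof (rule finite_subset)
  show "arc_maps A B \<subseteq> {f. \<forall>x. (x \<in> A \<longrightarrow> f x \<in> B) \<and> (x \<notin> A \<longrightarrow> f x = 0)}"
    by (auto simp: arc_maps_def dest: bij_betwE)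
qed (rule finite_set_of_finite_funs[OF assms])

lemma arc_maps_upd_iff:
  assumes "a \<in> A" "b \<in> B" "a < b"
  shows "g(a := b) \<in> arc_maps A B \<longleftrightarrow> g(a := 0) \<in> arc_maps (A - {a}) (B - {b})"
proof -
  have "bij_betw (g(a := b)) A B \<longleftrightarrow> bij_betw (g(a := b)) (A - {a}) (B - {b})"
    using notIn_Un_bij_betw3[of a "A - {a}" "g(a := b)" "B - {b}"] assms
    by (simp add: insert_absorb)
  also have "\<dots> \<longleftrightarrow> bij_betw (g(a := 0)) (A - {a}) (B - {b})"
    by (rule bij_betw_cong) simp
  finally show ?thesis
    using assms unfolding arc_maps_def by auto
qed

lemma arc_maps_fix_arc:
  assumes "a \<in> A" "b \<in> B" "a < b"
  shows "bij_betw (\<lambda>g. g(a := b)) (arc_maps (A - {a}) (B - {b})) {f \<in> arc_maps A B. f a = b}"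
proof (rule bij_betw_byWitness[where f' = "\<lambda>f. f(a := 0)"])
  have vanish: "g a = 0" if "g \<in> arc_maps (A - {a}) (B - {b})" for g
    using that unfolding arc_maps_def by auto
  show "\<forall>g \<in> arc_maps (A - {a}) (B - {b}). (g(a := b))(a := 0) = g"
    using vanish by auto
  show "\<forall>f \<in> {f \<in> arc_maps A B. f a = b}. (f(a := 0))(a := b) = f"
    by auto
  show "(\<lambda>g. g(a := b)) ` arc_maps (A - {a}) (B - {b}) \<subseteq> {f \<in> arc_maps A B. f a = b}"
    using arc_maps_upd_iff[OF assms] vanish by (auto simp: fun_upd_idem)
  show "(\<lambda>f. f(a := 0)) ` {f \<in> arc_maps A B. f a = b} \<subseteq> arc_maps (A - {a}) (B - {b})"
  proof -
    have "f(a := 0) \<in> arc_maps (A - {a}) (B - {b})" if "f \<in> arc_maps A B" "f a = b" for f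
      using arc_maps_upd_iff[OF assms, of f] that by (metis fun_upd_triv)
    then show ?thesis by blast
  qed
qed

lemma arc_maps_first_closer_innermost:
  assumes f: "f \<in> arc_maps A B" and first: "\<forall>c\<in>B. b \<le> c" and a: "a \<in> A" "f a = b"
    and j: "j \<in> A" "j \<noteq> a"
  shows "b < f j"
proof -
  have "f j \<in> B" "f j \<noteq> f a"
    using f j a unfolding arc_maps_def by (auto dest: bij_betwE bij_betw_imp_inj_on inj_onD)
  then show ?thesis
    using first a by force
qed

text \<open>Removing the arc that ends at the leftmost closer \<open>b\<close>: it lies inside every arc
  starting to its left and crosses exactly the arcs starting strictly between its ends.\<close>
lemma arc_nest_remove_first_closer:
  assumes f: "f \<in> arc_maps A B" and "finite A" and first: "\<forall>c\<in>B. b \<le> c"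
    and a: "a \<in> A" "f a = b"
  shows "arc_nest A f = arc_nest (A - {a}) (f(a := 0)) + card {x\<in>A. x < a}"
proof -
  note later = arc_maps_first_closer_innermost[OF f first a]
  let ?N = "{(i, j). i \<in> A - {a} \<and> j \<in> A - {a} \<and> j < i \<and> (f(a := 0)) i < (f(a := 0)) j}"
  have "{(i, j). i \<in> A \<and> j \<in> A \<and> j < i \<and> f i < f j} = ?N \<union> Pair a ` {x\<in>A. x < a}"
  proof (rule set_eqI)
    fix z :: "nat \<times> nat"
    obtain i j where z: "z = (i, j)" by fastforce
    show "z \<in> {(i, j). i \<in> A \<and> j \<in> A \<and> j < i \<and> f i < f j} \<longleftrightarrow> z \<in> ?N \<union> Pair a ` {x\<in>A. x < a}"
      unfolding z using later[of i] later[of j] a by auto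
  qed
  then have "arc_nest A f = card (?N \<union> Pair a ` {x\<in>A. x < a})"
    unfolding arc_nest_def by (rule arg_cong)
  also have "\<dots> = card ?N + card (Pair a ` {x\<in>A. x < a})"
    by (rule card_Un_disjoint) (use \<open>finite A\<close> in \<open>auto intro: finite_subset[of _ "A \<times> A"]\<close>)
  also have "card (Pair a ` {x\<in>A. x < a}) = card {x\<in>A. x < a}"
    by (rule card_image) (simp add: inj_on_def)
  finally show ?thesis
    unfolding arc_nest_def .
qed

lemma arc_cros_remove_first_closer:
  assumes f: "f \<in> arc_maps A B" and "finite A" and first: "\<forall>c\<in>B. b \<le> c"
    and a: "a \<in> A" "f a = b"
  shows "arc_cros A f = arc_cros (A - {a}) (f(a := 0)) + card {x\<in>A. a < x \<and> x < b}"
proof -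
  note later = arc_maps_first_closer_innermost[OF f first a]
  let ?C = "{(i, j). i \<in> A - {a} \<and> j \<in> A - {a} \<and> j < i \<and> i < (f(a := 0)) j
              \<and> (f(a := 0)) j < (f(a := 0)) i}"
  have "{(i, j). i \<in> A \<and> j \<in> A \<and> j < i \<and> i < f j \<and> f j < f i}
      = ?C \<union> (\<lambda>i. (i, a)) ` {x\<in>A. a < x \<and> x < b}"
  proof (rule set_eqI)
    fix z :: "nat \<times> nat"
    obtain i j where z: "z = (i, j)" by fastforce
    show "z \<in> {(i, j). i \<in> A \<and> j \<in> A \<and> j < i \<and> i < f j \<and> f j < f i}
        \<longleftrightarrow> z \<in> ?C \<union> (\<lambda>i. (i, a)) ` {x\<in>A. a < x \<and> x < b}"
      unfolding z using later[of i] later[of j] a by auto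
  qed
  then have "arc_cros A f = card (?C \<union> (\<lambda>i. (i, a)) ` {x\<in>A. a < x \<and> x < b})"
    unfolding arc_cros_def by (rule arg_cong)
  also have "\<dots> = card ?C + card ((\<lambda>i. (i, a)) ` {x\<in>A. a < x \<and> x < b})"
    by (rule card_Un_disjoint) (use \<open>finite A\<close> in \<open>auto intro: finite_subset[of _ "A \<times> A"]\<close>)
  also have "card ((\<lambda>i. (i, a)) ` {x\<in>A. a < x \<and> x < b}) = card {x\<in>A. a < x \<and> x < b}"
    by (rule card_image) (simp add: inj_on_def)
  finally show ?thesis
    unfolding arc_cros_def .
qed

lemma prod_open_arcs_remove_first_closer:
  fixes p q :: "'a::comm_semiring_1"
  assumes "finite A" "finite B" and a: "a \<in> A" "a < b" and b: "b \<in> B" "\<forall>c\<in>B. b \<le> c"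
  shows "(\<Prod>v\<in>B - {b}. pq_int p q (open_arcs (A - {a}) (B - {b}) v))
    = (\<Prod>v\<in>B - {b}. pq_int p q (open_arcs A B v))"
proof (rule prod.cong[OF refl])
  fix v assume "v \<in> B - {b}"
  with b have "b < v" by force
  have "{x\<in>A - {a}. x < v} = {x\<in>A. x < v} - {a}" "{x\<in>B - {b}. x < v} = {x\<in>B. x < v} - {b}"
    by auto
  moreover have "0 < card {x\<in>B. x < v}"
    using assms \<open>b < v\<close> by (auto simp: card_gt_0_iff)
  ultimately show "pq_int p q (open_arcs (A - {a}) (B - {b}) v) = pq_int p q (open_arcs A B v)"
    using assms \<open>b < v\<close> unfolding open_arcs_def by simp
qed

lemma sum_arc_maps_by_partner:
  assumes "finite A" "finite B" "b \<in> B"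
  shows "(\<Sum>f\<in>arc_maps A B. h f) = (\<Sum>a | a \<in> A \<and> a < b. \<Sum>f | f \<in> arc_maps A B \<and> f a = b. h f)"
proof -
  have "arc_maps A B = (\<Union>a\<in>{a\<in>A. a < b}. {f \<in> arc_maps A B. f a = b})"
  proof (intro equalityI subsetI)
    fix f assume f: "f \<in> arc_maps A B"
    then have "f ` A = B"
      unfolding arc_maps_def bij_betw_def by simp
    then obtain a where a: "a \<in> A" "f a = b"
      using assms(3) by force
    moreover have "a < f a"
      using f a(1) unfolding arc_maps_def by simp
    ultimately show "f \<in> (\<Union>a\<in>{a\<in>A. a < b}. {f \<in> arc_maps A B. f a = b})"
      using f by blast
  qed auto
  then have "(\<Sum>f\<in>arc_maps A B. h f) = (\<Sum>f\<in>(\<Union>a\<in>{a\<in>A. a < b}. {f \<in> arc_maps A B. f a = b}). h f)"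
    by (rule arg_cong)
  also have "\<dots> = (\<Sum>a | a \<in> A \<and> a < b. \<Sum>f | f \<in> arc_maps A B \<and> f a = b. h f)"
  proof (rule sum.UNION_disjoint)
    show "finite {a\<in>A. a < b}"
      using assms(1) by simp
    show "\<forall>a\<in>{a\<in>A. a < b}. finite {f \<in> arc_maps A B. f a = b}"
      using arc_maps_finite[OF assms(1,2)] by simp
    have distinct: "f a \<noteq> f a'" if "f \<in> arc_maps A B" "a \<in> A" "a' \<in> A" "a \<noteq> a'" for f a a'
    proof -
      have "inj_on f A"
        using that(1) unfolding arc_maps_def bij_betw_def by simp
      then show ?thesis
        using that(2-4) by (simp add: inj_on_eq_iff)
    qed
    show "\<forall>a\<in>{a\<in>A. a < b}. \<forall>a'\<in>{a\<in>A. a < b}. a \<noteq> a'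
        \<longrightarrow> {f \<in> arc_maps A B. f a = b} \<inter> {f \<in> arc_maps A B. f a' = b} = {}"
    proof (intro ballI impI equals0I)
      fix a a' f
      assume "a \<in> {a\<in>A. a < b}" "a' \<in> {a\<in>A. a < b}" "a \<noteq> a'"
        and "f \<in> {f \<in> arc_maps A B. f a = b} \<inter> {f \<in> arc_maps A B. f a' = b}"
      with distinct[of f a a'] show False by auto
    qed
  qed
  finally show ?thesis .
qed

lemma sum_arc_maps_first_closer:
  fixes p q :: "'a::comm_semiring_1"
  assumes "finite A" and b: "b \<in> B" "\<forall>c\<in>B. b \<le> c" and a: "a \<in> A" "a < b"
  shows "(\<Sum>f | f \<in> arc_maps A B \<and> f a = b. p ^ arc_nest A f * q ^ arc_cros A f)
    = p ^ card {x\<in>A. x < a} * q ^ card {x\<in>A. a < x \<and> x < b} *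
      (\<Sum>g\<in>arc_maps (A - {a}) (B - {b}). p ^ arc_nest (A - {a}) g * q ^ arc_cros (A - {a}) g)"
proof -
  have "(\<Sum>f | f \<in> arc_maps A B \<and> f a = b. p ^ arc_nest A f * q ^ arc_cros A f)
      = (\<Sum>g\<in>arc_maps (A - {a}) (B - {b}). p ^ arc_nest A (g(a := b)) * q ^ arc_cros A (g(a := b)))"
    by (rule sum.reindex_bij_betw[OF arc_maps_fix_arc[OF a(1) b(1) a(2)], symmetric])
  also have "\<dots> = (\<Sum>g\<in>arc_maps (A - {a}) (B - {b}).
      p ^ card {x\<in>A. x < a} * q ^ card {x\<in>A. a < x \<and> x < b}
      * (p ^ arc_nest (A - {a}) g * q ^ arc_cros (A - {a}) g))"
  proof (rule sum.cong[OF refl])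
    fix g assume g: "g \<in> arc_maps (A - {a}) (B - {b})"
    then have "g(a := b) \<in> arc_maps A B" "(g(a := b))(a := 0) = g"
      using bij_betwE[OF arc_maps_fix_arc[OF a(1) b(1) a(2)]] by (auto simp: arc_maps_def)
    with arc_nest_remove_first_closer[of "g(a := b)" A B b a]
      arc_cros_remove_first_closer[of "g(a := b)" A B b a] assms
    show "p ^ arc_nest A (g(a := b)) * q ^ arc_cros A (g(a := b))
      = p ^ card {x\<in>A. x < a} * q ^ card {x\<in>A. a < x \<and> x < b}
        * (p ^ arc_nest (A - {a}) g * q ^ arc_cros (A - {a}) g)"
      by (simp add: power_add ac_simps)
  qed
  finally show ?thesis
    by (simp add: sum_distrib_left)
qed

text \<open>Induction on the closers: the leftmost closer \<open>b\<close> is joined to one of the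
  \<open>open_arcs A B b\<close> openers to its left; choosing the one with \<open>k\<close> of them on its left
  creates \<open>k\<close> nestings and crossings with all the others, whence a factor
  \<open>pq_int p q (open_arcs A B b)\<close>.\<close>
lemma sum_arc_maps:
  fixes p q :: "'a::comm_semiring_1"
  assumes "finite A" "finite B" "card A = card B"
  shows "(\<Sum>f\<in>arc_maps A B. p ^ arc_nest A f * q ^ arc_cros A f)
    = (\<Prod>v\<in>B. pq_int p q (open_arcs A B v))"
  using assms
proof (induction "card B" arbitrary: A B)
  case 0
  then have "A = {}" "B = {}" by auto
  moreover have "arc_maps {} {} = {\<lambda>_. 0}"
    by (auto simp: arc_maps_def bij_betw_def)
  ultimately show ?case
    by (simp add: arc_nest_def arc_cros_def)
next
  case (Suc k)
  define b where "b = Min B"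
  have "B \<noteq> {}" using Suc.hyps(2) by auto
  then have b: "b \<in> B" "\<forall>c\<in>B. b \<le> c"
    using Suc.prems unfolding b_def by auto
  define J where "J = {a\<in>A. a < b}"
  define R where "R = (\<Prod>v\<in>B - {b}. pq_int p q (open_arcs A B v))"
  have "finite J" using Suc.prems unfolding J_def by auto
  have fiber: "(\<Sum>f | f \<in> arc_maps A B \<and> f a = b. p ^ arc_nest A f * q ^ arc_cros A f)
      = p ^ card {x\<in>J. x < a} * q ^ card {x\<in>J. a < x} * R" if "a \<in> J" for a
  proof -
    have a: "a \<in> A" "a < b" using that unfolding J_def by auto
    have "(\<Sum>g\<in>arc_maps (A - {a}) (B - {b}). p ^ arc_nest (A - {a}) g * q ^ arc_cros (A - {a}) g)
        = (\<Prod>v\<in>B - {b}. pq_int p q (open_arcs (A - {a}) (B - {b}) v))"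
      using Suc a b by (intro Suc.hyps) auto
    also have "\<dots> = R"
      unfolding R_def using Suc.prems(1,2) a b by (rule prod_open_arcs_remove_first_closer)
    finally have rest: "(\<Sum>g\<in>arc_maps (A - {a}) (B - {b}).
        p ^ arc_nest (A - {a}) g * q ^ arc_cros (A - {a}) g) = R" .
    have J_sets: "{x\<in>J. x < a} = {x\<in>A. x < a}" "{x\<in>J. a < x} = {x\<in>A. a < x \<and> x < b}"
      using a unfolding J_def by auto
    show ?thesis
      unfolding sum_arc_maps_first_closer[OF \<open>finite A\<close> b a] rest J_sets ..
  qed
  have "(\<Sum>f\<in>arc_maps A B. p ^ arc_nest A f * q ^ arc_cros A f)
      = (\<Sum>a\<in>J. \<Sum>f | f \<in> arc_maps A B \<and> f a = b. p ^ arc_nest A f * q ^ arc_cros A f)"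
    unfolding J_def using Suc.prems(1,2) b(1) by (rule sum_arc_maps_by_partner)
  also have "\<dots> = (\<Sum>a\<in>J. p ^ card {x\<in>J. x < a} * q ^ card {x\<in>J. a < x}) * R"
    using fiber by (simp add: sum_distrib_right)
  also have "\<dots> = pq_int p q (card J) * R"
    by (simp only: sum_rank_powers[OF \<open>finite J\<close>])
  also have "card J = open_arcs A B b"
  proof -
    have none_below: "{c\<in>B. c < b} = {}" using b(2) by force
    show ?thesis unfolding open_arcs_def J_def none_below by simp
  qed
  finally show ?case
    unfolding R_def using Suc.prems b by (simp add: prod.remove)
qed

section \<open>Permutations as pairs of arc diagrams\<close>

definition exc_pos :: "nat \<Rightarrow> (nat \<Rightarrow> nat) \<Rightarrow> nat set" where
  "exc_pos n \<sigma> = {i\<in>{1..n}. i < \<sigma> i}"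

definition exc_val :: "nat \<Rightarrow> (nat \<Rightarrow> nat) \<Rightarrow> nat set" where
  "exc_val n \<sigma> = \<sigma> ` exc_pos n \<sigma>"

definition upper_arcs :: "nat \<Rightarrow> (nat \<Rightarrow> nat) \<Rightarrow> nat \<Rightarrow> nat" where
  "upper_arcs n \<sigma> i = (if i \<in> exc_pos n \<sigma> then \<sigma> i else 0)"

text \<open>A weak deficiency \<open>\<sigma> i \<le> i\<close> is drawn as the arc from \<open>\<sigma> i\<close> to \<open>i + 1\<close>; the shift makes
  these arcs point strictly to the right, and their nestings and crossings are exactly the
  lower nestings and crossings of \<open>\<sigma>\<close>.\<close>
definition lower_arcs :: "nat \<Rightarrow> (nat \<Rightarrow> nat) \<Rightarrow> nat \<Rightarrow> nat" where
  "lower_arcs n \<sigma> t = (if t \<in> {1..n} - exc_val n \<sigma> then Suc (inv \<sigma> t) else 0)"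

lemma exc_pos_iff: "i \<in> exc_pos n \<sigma> \<longleftrightarrow> i \<in> {1..n} \<and> i < \<sigma> i"
  unfolding exc_pos_def by simp

lemma exc_val_iff:
  assumes "\<sigma> permutes {1..n}"
  shows "t \<in> exc_val n \<sigma> \<longleftrightarrow> t \<in> {1..n} \<and> inv \<sigma> t < t"
  using permutes_in_image[OF assms] permutes_inverses[OF assms]
    permutes_in_image[OF permutes_inv[OF assms]]
  unfolding exc_val_def exc_pos_def by (auto intro!: image_eqI[where x = "inv \<sigma> t"])

lemma not_exc_val_iff:
  assumes "\<sigma> permutes {1..n}"
  shows "t \<in> {1..n} - exc_val n \<sigma> \<longleftrightarrow> t \<in> {1..n} \<and> t \<le> inv \<sigma> t"
  using exc_val_iff[OF assms, of t] by auto

lemma card_deficiency_pairs: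
  assumes sp: "\<sigma> permutes {1..n}"
  shows "card {(i, j). i \<in> {1..n} \<and> j \<in> {1..n} \<and> \<sigma> i \<le> i \<and> \<sigma> j \<le> j \<and> P (\<sigma> i) (\<sigma> j) (Suc i) (Suc j)}
    = card {(u, v). u \<in> {1..n} - exc_val n \<sigma> \<and> v \<in> {1..n} - exc_val n \<sigma>
        \<and> P u v (lower_arcs n \<sigma> u) (lower_arcs n \<sigma> v)}"
proof -
  note perm = permutes_in_image[OF sp] permutes_in_image[OF permutes_inv[OF sp]]
    permutes_inverses[OF sp] inj_eq[OF permutes_inj[OF sp]]
  let ?D = "{(i, j). i \<in> {1..n} \<and> j \<in> {1..n} \<and> \<sigma> i \<le> i \<and> \<sigma> j \<le> j \<and> P (\<sigma> i) (\<sigma> j) (Suc i) (Suc j)}"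
  have image: "(\<lambda>(i, j). (\<sigma> i, \<sigma> j)) ` ?D
      = {(u, v). u \<in> {1..n} - exc_val n \<sigma> \<and> v \<in> {1..n} - exc_val n \<sigma>
      \<and> P u v (lower_arcs n \<sigma> u) (lower_arcs n \<sigma> v)}"
  proof (rule set_eqI, rule iffI)
    fix z assume "z \<in> (\<lambda>(i, j). (\<sigma> i, \<sigma> j)) ` ?D"
    then obtain w where "w \<in> ?D" "z = (\<lambda>(i, j). (\<sigma> i, \<sigma> j)) w"
      by blast
    moreover obtain i j where "w = (i, j)"
      by fastforce
    ultimately have z: "z = (\<sigma> i, \<sigma> j)" and ij: "(i, j) \<in> ?D"
      by auto
    moreover have "\<sigma> i \<in> {1..n}" "\<sigma> j \<in> {1..n}"
      using ij permutes_in_image[OF sp] by auto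
    ultimately show "z \<in> {(u, v). u \<in> {1..n} - exc_val n \<sigma> \<and> v \<in> {1..n} - exc_val n \<sigma>
        \<and> P u v (lower_arcs n \<sigma> u) (lower_arcs n \<sigma> v)}"
      using perm unfolding lower_arcs_def not_exc_val_iff[OF sp] by auto
  next
    fix z assume "z \<in> {(u, v). u \<in> {1..n} - exc_val n \<sigma> \<and> v \<in> {1..n} - exc_val n \<sigma>
        \<and> P u v (lower_arcs n \<sigma> u) (lower_arcs n \<sigma> v)}"
    then obtain u v where z: "z = (u, v)" and uv: "u \<in> {1..n}" "v \<in> {1..n}"
      "u \<le> inv \<sigma> u" "v \<le> inv \<sigma> v" "P u v (Suc (inv \<sigma> u)) (Suc (inv \<sigma> v))"
      unfolding lower_arcs_def not_exc_val_iff[OF sp] by auto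
    moreover have "inv \<sigma> u \<in> {1..n}" "inv \<sigma> v \<in> {1..n}"
      using uv permutes_in_image[OF permutes_inv[OF sp]] by auto
    ultimately have "(inv \<sigma> u, inv \<sigma> v) \<in> ?D"
      using perm by auto
    then show "z \<in> (\<lambda>(i, j). (\<sigma> i, \<sigma> j)) ` ?D"
      by (rule image_eqI[rotated]) (simp add: z perm)
  qed
  have "inj_on (\<lambda>(i, j). (\<sigma> i, \<sigma> j)) ?D"
    using perm by (auto simp: inj_on_def)
  from card_image[OF this] show ?thesis
    by (simp only: image)
qed

lemma nest_eq_arc_nest:
  assumes sp: "\<sigma> permutes {1..n}"
  shows "nest n \<sigma> = arc_nest (exc_pos n \<sigma>) (upper_arcs n \<sigma>)
    + arc_nest ({1..n} - exc_val n \<sigma>) (lower_arcs n \<sigma>)"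
proof -
  let ?U = "{(i, j). i \<in> {1..n} \<and> j \<in> {1..n} \<and> j < i \<and> i < \<sigma> i \<and> \<sigma> i < \<sigma> j}"
  let ?L = "{(i, j). i \<in> {1..n} \<and> j \<in> {1..n} \<and> \<sigma> i \<le> i \<and> \<sigma> j \<le> j \<and> \<sigma> j < \<sigma> i \<and> Suc i < Suc j}"
  have "nest n \<sigma> = card (SIGMA i:{1..n}. {j \<in> {1..n}.
      (j < i \<and> i < \<sigma> i \<and> \<sigma> i < \<sigma> j) \<or> (\<sigma> j < \<sigma> i \<and> \<sigma> i \<le> i \<and> i < j)})"
    unfolding nest_def nest_i_def by (subst card_SigmaI) auto
  also have "(SIGMA i:{1..n}. {j \<in> {1..n}.
      (j < i \<and> i < \<sigma> i \<and> \<sigma> i < \<sigma> j) \<or> (\<sigma> j < \<sigma> i \<and> \<sigma> i \<le> i \<and> i < j)}) = ?U \<union> ?L"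
    by auto
  also have "card (?U \<union> ?L) = card ?U + card ?L"
    by (rule card_Un_disjoint) (auto intro: finite_subset[of _ "{1..n} \<times> {1..n}"])
  also have "card ?U = arc_nest (exc_pos n \<sigma>) (upper_arcs n \<sigma>)"
    unfolding arc_nest_def upper_arcs_def exc_pos_iff by (auto intro!: arg_cong[where f = card])
  also have "card ?L = arc_nest ({1..n} - exc_val n \<sigma>) (lower_arcs n \<sigma>)"
    unfolding arc_nest_def by (rule card_deficiency_pairs[OF sp])
  finally show ?thesis .
qed

lemma cros_eq_arc_cros:
  assumes sp: "\<sigma> permutes {1..n}"
  shows "cros n \<sigma> = arc_cros (exc_pos n \<sigma>) (upper_arcs n \<sigma>)
    + arc_cros ({1..n} - exc_val n \<sigma>) (lower_arcs n \<sigma>)"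
proof -
  let ?T = "{1..n} - exc_val n \<sigma>"
  let ?U = "{(i, j). i \<in> {1..n} \<and> j \<in> {1..n} \<and> j < i \<and> i < \<sigma> j \<and> \<sigma> j < \<sigma> i}"
  let ?L = "{(i, j). i \<in> {1..n} \<and> j \<in> {1..n} \<and> \<sigma> i \<le> i \<and> \<sigma> j \<le> j
      \<and> \<sigma> i < \<sigma> j \<and> \<sigma> j < Suc i \<and> Suc i < Suc j}"
  have "cros n \<sigma> = card (SIGMA i:{1..n}. {j \<in> {1..n}.
      (j < i \<and> i < \<sigma> j \<and> \<sigma> j < \<sigma> i) \<or> (\<sigma> i < \<sigma> j \<and> \<sigma> j \<le> i \<and> i < j)})"
    unfolding cros_def cros_i_def by (subst card_SigmaI) auto
  also have "(SIGMA i:{1..n}. {j \<in> {1..n}.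
      (j < i \<and> i < \<sigma> j \<and> \<sigma> j < \<sigma> i) \<or> (\<sigma> i < \<sigma> j \<and> \<sigma> j \<le> i \<and> i < j)}) = ?U \<union> ?L"
    by auto
  also have "card (?U \<union> ?L) = card ?U + card ?L"
    by (rule card_Un_disjoint) (auto intro: finite_subset[of _ "{1..n} \<times> {1..n}"])
  also have "card ?U = arc_cros (exc_pos n \<sigma>) (upper_arcs n \<sigma>)"
    unfolding arc_cros_def upper_arcs_def exc_pos_iff by (auto intro!: arg_cong[where f = card])
  also have "card ?L = card {(u, v). u \<in> ?T \<and> v \<in> ?T
      \<and> u < v \<and> v < lower_arcs n \<sigma> u \<and> lower_arcs n \<sigma> u < lower_arcs n \<sigma> v}"
    by (rule card_deficiency_pairs[OF sp])
  also have "\<dots> = arc_cros ?T (lower_arcs n \<sigma>)"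
    unfolding arc_cros_def
    by (subst card_image[OF swap_inj_on, symmetric]) (auto intro!: arg_cong[where f = card])
  finally show ?thesis .
qed

lemma inj_on_star_comp:
  assumes sp: "\<sigma> permutes {1..n}"
  shows "inj_on (star_comp n \<sigma>) {0..n}"
proof (rule inj_onI)
  fix a b assume ab: "a \<in> {0..n}" "b \<in> {0..n}" and eq: "star_comp n \<sigma> a = star_comp n \<sigma> b"
  have range: "\<sigma> i \<in> {1..n}" if "i \<in> {0..n}" "i \<noteq> 0" for i
    using that permutes_in_image[OF sp] by auto
  show "a = b"
  proof (cases "a = 0 \<or> b = 0")
    case True
    then show ?thesis
      using eq range[of a] range[of b] ab unfolding star_comp_def by (auto split: if_splits)
  next
    case False
    then have "\<sigma> a = \<sigma> b"
      using eq range[of a] range[of b] ab unfolding star_comp_def by auto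
    then show ?thesis
      using permutes_inj[OF sp] by (simp add: inj_eq)
  qed
qed

text \<open>\<open>i\<close> is a cyclic peak of \<open>\<sigma>\<^sup>*\<close> iff \<open>\<sigma> i \<le> i\<close> and \<open>\<sigma>\<inverse>(i + 1) < i\<close>, i.e. iff \<open>i\<close> is not an
  excedance position but \<open>i + 1\<close> is an excedance value of \<open>\<sigma>\<close>.\<close>
lemma cpk_star_eq:
  assumes sp: "\<sigma> permutes {1..n}"
  shows "cpk_star n \<sigma> = card {k\<in>{1..n-1}. k \<notin> exc_pos n \<sigma> \<and> Suc k \<in> exc_val n \<sigma>}"
proof -
  have "i \<in> {1..n-1} \<and> inv_into {0..n} (star_comp n \<sigma>) i < i \<and> star_comp n \<sigma> i < i
      \<longleftrightarrow> i \<in> {1..n-1} \<and> i \<notin> exc_pos n \<sigma> \<and> Suc i \<in> exc_val n \<sigma>" for i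
  proof (cases "i \<in> {1..n-1}")
    case True
    define x where "x = inv \<sigma> (Suc i)"
    have "Suc i \<in> {1..n}" using True by auto
    then have x: "x \<in> {1..n}" "\<sigma> x = Suc i"
      using permutes_in_image[OF permutes_inv[OF sp]] permutes_inverses[OF sp]
      unfolding x_def by auto
    have "inv_into {0..n} (star_comp n \<sigma>) i = x"
      by (rule inv_into_f_eq[OF inj_on_star_comp[OF sp]]) (use x in \<open>auto simp: star_comp_def\<close>)
    moreover have "star_comp n \<sigma> i < i \<longleftrightarrow> i \<notin> exc_pos n \<sigma>"
      using True permutes_in_image[OF sp, of i] unfolding star_comp_def exc_pos_iff by auto
    moreover have "Suc i \<in> exc_val n \<sigma> \<longleftrightarrow> x < Suc i"
      using exc_val_iff[OF sp, of "Suc i"] \<open>Suc i \<in> {1..n}\<close> unfolding x_def by auto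
    moreover have "x \<noteq> i" if "i \<notin> exc_pos n \<sigma>"
      using that x True unfolding exc_pos_iff by auto
    ultimately show ?thesis
      using True by auto
  qed auto
  then show ?thesis
    unfolding cpk_star_def by simp
qed

lemma upper_arcs_in_arc_maps:
  assumes sp: "\<sigma> permutes {1..n}"
  shows "upper_arcs n \<sigma> \<in> arc_maps (exc_pos n \<sigma>) (exc_val n \<sigma>)"
proof -
  have "bij_betw \<sigma> (exc_pos n \<sigma>) (exc_val n \<sigma>)"
    unfolding exc_val_def by (rule inj_on_imp_bij_betw) (use permutes_inj_on[OF sp] in blast)
  then have "bij_betw (upper_arcs n \<sigma>) (exc_pos n \<sigma>) (exc_val n \<sigma>)"
    by (rule iffD1[OF bij_betw_cong, rotated]) (simp add: upper_arcs_def)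
  then show ?thesis
    unfolding arc_maps_def by (auto simp: upper_arcs_def exc_pos_iff)
qed

lemma lower_arcs_in_arc_maps:
  assumes sp: "\<sigma> permutes {1..n}"
  shows "lower_arcs n \<sigma> \<in> arc_maps ({1..n} - exc_val n \<sigma>) (Suc ` ({1..n} - exc_pos n \<sigma>))"
proof -
  let ?T = "{1..n} - exc_val n \<sigma>"
  have "inv \<sigma> ` ?T = {1..n} - exc_pos n \<sigma>"
  proof (rule set_eqI, rule iffI)
    fix i assume "i \<in> inv \<sigma> ` ?T"
    then obtain t where t: "t \<in> {1..n}" "t \<le> inv \<sigma> t" "i = inv \<sigma> t"
      using not_exc_val_iff[OF sp] by blast
    then show "i \<in> {1..n} - exc_pos n \<sigma>"
      using permutes_in_image[OF permutes_inv[OF sp], of t] permutes_inverses(1)[OF sp, of t]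
      by (auto simp: exc_pos_iff)
  next
    fix i assume "i \<in> {1..n} - exc_pos n \<sigma>"
    then have "i \<in> {1..n}" "\<sigma> i \<le> i"
      by (auto simp: exc_pos_iff)
    then have "\<sigma> i \<in> ?T"
      using not_exc_val_iff[OF sp, of "\<sigma> i"] permutes_in_image[OF sp, of i]
        permutes_inverses(2)[OF sp, of i] by auto
    then show "i \<in> inv \<sigma> ` ?T"
      using permutes_inverses(2)[OF sp, of i] by (metis image_eqI)
  qed
  moreover have "inj_on (\<lambda>t. Suc (inv \<sigma> t)) ?T"
    using permutes_inj_on[OF permutes_inv[OF sp], of ?T] by (simp add: inj_on_def)
  ultimately have "bij_betw (\<lambda>t. Suc (inv \<sigma> t)) ?T (Suc ` ({1..n} - exc_pos n \<sigma>))"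
    by (simp add: bij_betw_def image_image[of Suc "inv \<sigma>", symmetric])
  then have "bij_betw (lower_arcs n \<sigma>) ?T (Suc ` ({1..n} - exc_pos n \<sigma>))"
    by (rule iffD1[OF bij_betw_cong, rotated]) (simp add: lower_arcs_def)
  moreover have "t < lower_arcs n \<sigma> t" if "t \<in> ?T" for t
    using that not_exc_val_iff[OF sp, of t] unfolding lower_arcs_def by auto
  moreover have "lower_arcs n \<sigma> t = 0" if "t \<notin> ?T" for t
    using that unfolding lower_arcs_def by auto
  ultimately show ?thesis
    unfolding arc_maps_def by blast
qed

text \<open>The inverse decomposition: \<open>i \<notin> A\<close> is sent to the start of the lower arc ending at \<open>i + 1\<close>.\<close>
definition perm_of_arcs :: "nat \<Rightarrow> nat set \<Rightarrow> nat set \<Rightarrow> (nat \<Rightarrow> nat) \<Rightarrow> (nat \<Rightarrow> nat) \<Rightarrow> nat \<Rightarrow> nat" where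
  "perm_of_arcs n A B f g i =
    (if i \<in> A then f i else if i \<in> {1..n} then inv_into ({1..n} - B) g (Suc i) else i)"

context
  fixes n :: nat and A B :: "nat set" and f g :: "nat \<Rightarrow> nat"
  assumes A: "A \<subseteq> {1..n}" and B: "B \<subseteq> {1..n}"
    and f: "f \<in> arc_maps A B" and g: "g \<in> arc_maps ({1..n} - B) (Suc ` ({1..n} - A))"
begin

lemma perm_of_arcs_lower:
  assumes "i \<in> {1..n} - A"
  shows "perm_of_arcs n A B f g i \<in> {1..n} - B" and "g (perm_of_arcs n A B f g i) = Suc i"
proof -
  have "Suc i \<in> g ` ({1..n} - B)"
    using g assms unfolding arc_maps_def bij_betw_def by simp
  moreover have "perm_of_arcs n A B f g i = inv_into ({1..n} - B) g (Suc i)"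
    using assms unfolding perm_of_arcs_def by simp
  ultimately show "perm_of_arcs n A B f g i \<in> {1..n} - B" "g (perm_of_arcs n A B f g i) = Suc i"
    by (simp_all only: inv_into_into f_inv_into_f)
qed

lemma perm_of_arcs_permutes: "perm_of_arcs n A B f g permutes {1..n}"
proof (rule bij_imp_permutes)
  let ?\<tau> = "perm_of_arcs n A B f g"
  have into: "?\<tau> ` {1..n} \<subseteq> {1..n}"
  proof clarify
    fix i assume "i \<in> {1..n}"
    moreover have "f i \<in> B" if "i \<in> A"
      using f that unfolding arc_maps_def by (auto dest: bij_betwE)
    ultimately show "?\<tau> i \<in> {1..n}"
      using B perm_of_arcs_lower(1)[of i] unfolding perm_of_arcs_def by auto
  qed
  have onto: "{1..n} \<subseteq> ?\<tau> ` {1..n}"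
  proof
    fix v assume v: "v \<in> {1..n}"
    show "v \<in> ?\<tau> ` {1..n}"
    proof (cases "v \<in> B")
      case True
      then obtain j where "j \<in> A" "f j = v"
        using f unfolding arc_maps_def bij_betw_def by auto
      then show ?thesis
        using A unfolding perm_of_arcs_def by (auto intro!: image_eqI[where x = j])
    next
      case False
      then have "g v \<in> Suc ` ({1..n} - A)"
        using g v unfolding arc_maps_def by (auto dest: bij_betwE)
      then obtain j where j: "j \<in> {1..n} - A" "g v = Suc j" by blast
      have "g (?\<tau> j) = g v" "?\<tau> j \<in> {1..n} - B"
        using perm_of_arcs_lower[OF j(1)] j(2) by auto
      then have "?\<tau> j = v"
        using g v False unfolding arc_maps_def bij_betw_def by (auto dest: inj_onD)
      then show ?thesis
        using j(1) by blast
    qed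
  qed
  have "?\<tau> ` {1..n} = {1..n}"
    using into onto by blast
  moreover have "inj_on ?\<tau> {1..n}"
    using onto by (intro finite_surj_inj) simp_all
  ultimately show "bij_betw ?\<tau> {1..n} {1..n}"
    by (simp add: bij_betw_def)
  show "?\<tau> x = x" if "x \<notin> {1..n}" for x
    using that A unfolding perm_of_arcs_def by auto
qed

lemma exc_pos_perm_of_arcs: "exc_pos n (perm_of_arcs n A B f g) = A"
proof (rule set_eqI)
  fix i
  show "i \<in> exc_pos n (perm_of_arcs n A B f g) \<longleftrightarrow> i \<in> A"
  proof (cases "i \<in> {1..n} - A")
    case True
    have "perm_of_arcs n A B f g i < g (perm_of_arcs n A B f g i)"
      using g perm_of_arcs_lower(1)[OF True] unfolding arc_maps_def by blast
    then show ?thesis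
      using True perm_of_arcs_lower(2)[OF True] unfolding exc_pos_iff by auto
  next
    case False
    then show ?thesis
      using A f unfolding exc_pos_iff arc_maps_def perm_of_arcs_def by auto
  qed
qed

lemma exc_val_perm_of_arcs: "exc_val n (perm_of_arcs n A B f g) = B"
  using f unfolding exc_val_def exc_pos_perm_of_arcs arc_maps_def bij_betw_def
  by (auto simp: perm_of_arcs_def)

lemma upper_arcs_perm_of_arcs: "upper_arcs n (perm_of_arcs n A B f g) = f"
  using f unfolding upper_arcs_def exc_pos_perm_of_arcs arc_maps_def
  by (auto simp: perm_of_arcs_def)

lemma lower_arcs_perm_of_arcs: "lower_arcs n (perm_of_arcs n A B f g) = g"
proof
  fix t
  show "lower_arcs n (perm_of_arcs n A B f g) t = g t"
  proof (cases "t \<in> {1..n} - B")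
    case True
    then have "g t \<in> Suc ` ({1..n} - A)"
      using g unfolding arc_maps_def by (auto dest: bij_betwE)
    then obtain j where j: "j \<in> {1..n} - A" "g t = Suc j" by blast
    have "g (perm_of_arcs n A B f g j) = g t" "perm_of_arcs n A B f g j \<in> {1..n} - B"
      using perm_of_arcs_lower[OF j(1)] j(2) by auto
    then have "perm_of_arcs n A B f g j = t"
      using g True unfolding arc_maps_def bij_betw_def by (auto dest: inj_onD)
    then have "inv (perm_of_arcs n A B f g) t = j"
      using permutes_inv_eq[OF perm_of_arcs_permutes] by blast
    then show ?thesis
      using True j(2) unfolding lower_arcs_def exc_val_perm_of_arcs by simp
  next
    case False
    then show ?thesis
      using g unfolding lower_arcs_def exc_val_perm_of_arcs arc_maps_def by auto
  qed
qed

end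

lemma perm_of_arcs_arcs:
  assumes sp: "\<sigma> permutes {1..n}"
  shows "perm_of_arcs n (exc_pos n \<sigma>) (exc_val n \<sigma>) (upper_arcs n \<sigma>) (lower_arcs n \<sigma>) = \<sigma>"
proof
  fix i
  show "perm_of_arcs n (exc_pos n \<sigma>) (exc_val n \<sigma>) (upper_arcs n \<sigma>) (lower_arcs n \<sigma>) i = \<sigma> i"
  proof (cases "i \<in> {1..n} - exc_pos n \<sigma>")
    case True
    have "inj_on (lower_arcs n \<sigma>) ({1..n} - exc_val n \<sigma>)"
      using lower_arcs_in_arc_maps[OF sp] unfolding arc_maps_def bij_betw_def by blast
    moreover have "\<sigma> i \<in> {1..n} - exc_val n \<sigma>"
      using True not_exc_val_iff[OF sp, of "\<sigma> i"] permutes_in_image[OF sp, of i]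
        permutes_inverses(2)[OF sp, of i] by (auto simp: exc_pos_iff)
    moreover have "lower_arcs n \<sigma> (\<sigma> i) = Suc i"
      using calculation(2) permutes_inverses(2)[OF sp, of i] unfolding lower_arcs_def by simp
    ultimately have "inv_into ({1..n} - exc_val n \<sigma>) (lower_arcs n \<sigma>) (Suc i) = \<sigma> i"
      by (rule inv_into_f_eq)
    then show ?thesis
      using True unfolding perm_of_arcs_def by simp
  next
    case False
    then show ?thesis
      using permutes_not_in[OF sp, of i]
      unfolding perm_of_arcs_def upper_arcs_def by (auto simp: exc_pos_iff)
  qed
qed

lemma bij_betw_arcs_exc_fiber:
  assumes "A \<subseteq> {1..n}" "B \<subseteq> {1..n}"
  shows "bij_betw (\<lambda>\<sigma>. (upper_arcs n \<sigma>, lower_arcs n \<sigma>))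
    {\<sigma> \<in> Sym n. exc_pos n \<sigma> = A \<and> exc_val n \<sigma> = B}
    (arc_maps A B \<times> arc_maps ({1..n} - B) (Suc ` ({1..n} - A)))"
proof (rule bij_betw_byWitness[where f' = "\<lambda>(f, g). perm_of_arcs n A B f g"])
  show "\<forall>\<sigma> \<in> {\<sigma> \<in> Sym n. exc_pos n \<sigma> = A \<and> exc_val n \<sigma> = B}.
      (\<lambda>(f, g). perm_of_arcs n A B f g) (upper_arcs n \<sigma>, lower_arcs n \<sigma>) = \<sigma>"
    using perm_of_arcs_arcs by (auto simp: Sym_def)
  show "(\<lambda>\<sigma>. (upper_arcs n \<sigma>, lower_arcs n \<sigma>)) ` {\<sigma> \<in> Sym n. exc_pos n \<sigma> = A \<and> exc_val n \<sigma> = B}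
      \<subseteq> arc_maps A B \<times> arc_maps ({1..n} - B) (Suc ` ({1..n} - A))"
    using upper_arcs_in_arc_maps lower_arcs_in_arc_maps by (auto simp: Sym_def)
  show "\<forall>fg \<in> arc_maps A B \<times> arc_maps ({1..n} - B) (Suc ` ({1..n} - A)).
      (\<lambda>\<sigma>. (upper_arcs n \<sigma>, lower_arcs n \<sigma>)) ((\<lambda>(f, g). perm_of_arcs n A B f g) fg) = fg"
    using assms upper_arcs_perm_of_arcs lower_arcs_perm_of_arcs by auto
  show "(\<lambda>(f, g). perm_of_arcs n A B f g)
      ` (arc_maps A B \<times> arc_maps ({1..n} - B) (Suc ` ({1..n} - A)))
      \<subseteq> {\<sigma> \<in> Sym n. exc_pos n \<sigma> = A \<and> exc_val n \<sigma> = B}"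
    using assms perm_of_arcs_permutes exc_pos_perm_of_arcs exc_val_perm_of_arcs
    by (auto simp: Sym_def)
qed

lemma sum_exc_fiber_eq_arc_sums:
  fixes p q s y :: "'a::comm_semiring_1"
  assumes "A \<subseteq> {1..n}" "B \<subseteq> {1..n}"
  shows "(\<Sum>\<sigma> | \<sigma> \<in> Sym n \<and> exc_pos n \<sigma> = A \<and> exc_val n \<sigma> = B.
            p ^ nest n \<sigma> * q ^ cros n \<sigma> * s ^ cpk_star n \<sigma> * y ^ exc n \<sigma>)
    = s ^ card {k\<in>{1..n-1}. k \<notin> A \<and> Suc k \<in> B} * y ^ card A
      * (\<Sum>f\<in>arc_maps A B. p ^ arc_nest A f * q ^ arc_cros A f)
      * (\<Sum>g\<in>arc_maps ({1..n} - B) (Suc ` ({1..n} - A)).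
           p ^ arc_nest ({1..n} - B) g * q ^ arc_cros ({1..n} - B) g)"
proof -
  let ?w = "\<lambda>(f, g). s ^ card {k\<in>{1..n-1}. k \<notin> A \<and> Suc k \<in> B} * y ^ card A
    * (p ^ arc_nest A f * q ^ arc_cros A f)
    * (p ^ arc_nest ({1..n} - B) g * q ^ arc_cros ({1..n} - B) g)"
  have "(\<Sum>\<sigma> | \<sigma> \<in> Sym n \<and> exc_pos n \<sigma> = A \<and> exc_val n \<sigma> = B.
            p ^ nest n \<sigma> * q ^ cros n \<sigma> * s ^ cpk_star n \<sigma> * y ^ exc n \<sigma>)
      = (\<Sum>\<sigma> | \<sigma> \<in> Sym n \<and> exc_pos n \<sigma> = A \<and> exc_val n \<sigma> = B.
            ?w (upper_arcs n \<sigma>, lower_arcs n \<sigma>))"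
  proof (rule sum.cong[OF refl])
    fix \<sigma> assume "\<sigma> \<in> {\<sigma>. \<sigma> \<in> Sym n \<and> exc_pos n \<sigma> = A \<and> exc_val n \<sigma> = B}"
    then have sp: "\<sigma> permutes {1..n}" and AB: "exc_pos n \<sigma> = A" "exc_val n \<sigma> = B"
      by (auto simp: Sym_def)
    have "exc n \<sigma> = card A"
      using AB unfolding exc_def exc_pos_def by simp
    then show "p ^ nest n \<sigma> * q ^ cros n \<sigma> * s ^ cpk_star n \<sigma> * y ^ exc n \<sigma>
        = ?w (upper_arcs n \<sigma>, lower_arcs n \<sigma>)"
      unfolding nest_eq_arc_nest[OF sp] cros_eq_arc_cros[OF sp] cpk_star_eq[OF sp] AB
      by (simp add: power_add ac_simps)
  qed
  also have "\<dots> = (\<Sum>fg\<in>arc_maps A B \<times> arc_maps ({1..n} - B) (Suc ` ({1..n} - A)). ?w fg)"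
    by (rule sum.reindex_bij_betw[OF bij_betw_arcs_exc_fiber[OF assms]])
  also have "\<dots> = (\<Sum>f\<in>arc_maps A B. \<Sum>g\<in>arc_maps ({1..n} - B) (Suc ` ({1..n} - A)). ?w (f, g))"
    by (simp add: sum.cartesian_product)
  also have "\<dots> = s ^ card {k\<in>{1..n-1}. k \<notin> A \<and> Suc k \<in> B} * y ^ card A
      * ((\<Sum>f\<in>arc_maps A B. p ^ arc_nest A f * q ^ arc_cros A f)
      * (\<Sum>g\<in>arc_maps ({1..n} - B) (Suc ` ({1..n} - A)).
           p ^ arc_nest ({1..n} - B) g * q ^ arc_cros ({1..n} - B) g))"
    unfolding sum_product by (simp add: sum_distrib_left mult.assoc)
  finally show ?thesis
    by (simp only: mult.assoc)
qed

section \<open>Motzkin paths from excedance data\<close>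

text \<open>A pair \<open>(A, B) \<in> paths m\<close> encodes the Motzkin path of length \<open>m\<close> whose \<open>k\<close>-th step
  changes the height by \<open>[k \<in> A] - [k + 1 \<in> B]\<close>; the excedance positions and values of a
  permutation of \<open>{1..m+1}\<close> form such a pair.\<close>
definition paths :: "nat \<Rightarrow> (nat set \<times> nat set) set" where
  "paths m = {(A, B). A \<subseteq> {1..m} \<and> B \<subseteq> {2..Suc m}}"

definition path_height :: "nat set \<Rightarrow> nat set \<Rightarrow> nat \<Rightarrow> int" where
  "path_height A B k = int (card {a\<in>A. a \<le> k}) - int (card {b\<in>B. b \<le> Suc k})"

text \<open>The first product runs over the steps \<open>k\<close> with \<open>k + 1 \<in> B\<close> (level steps with \<open>k \<in> A\<close> and
  down steps), the second over the steps with \<open>k \<notin> A\<close> (level steps with \<open>k + 1 \<notin> B\<close> and down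
  steps); a path that ever goes below height \<open>0\<close> gets a factor \<open>pq_int p q 0 = 0\<close>.\<close>
definition path_weight :: "'a::comm_semiring_1 \<Rightarrow> 'a \<Rightarrow> 'a \<Rightarrow> 'a \<Rightarrow> nat \<Rightarrow> nat set \<Rightarrow> nat set \<Rightarrow> 'a" where
  "path_weight p q s y m A B = s ^ card {k\<in>{1..m}. k \<notin> A \<and> Suc k \<in> B} * y ^ card A
     * (\<Prod>k | k \<in> {1..m} \<and> Suc k \<in> B. pq_int p q (nat (path_height A B k + 1)))
     * (\<Prod>k | k \<in> {1..m} \<and> k \<notin> A. pq_int p q (nat (path_height A B (k - 1) + 1)))"

definition path_sum :: "'a::comm_semiring_1 \<Rightarrow> 'a \<Rightarrow> 'a \<Rightarrow> 'a \<Rightarrow> nat \<Rightarrow> int \<Rightarrow> 'a" where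
  "path_sum p q s y m D =
     (\<Sum>(A, B)\<in>paths m. if path_height A B m = D then path_weight p q s y m A B else 0)"

definition path_snoc :: "nat \<Rightarrow> (nat set \<times> nat set) \<times> (bool \<times> bool) \<Rightarrow> nat set \<times> nat set" where
  "path_snoc m = (\<lambda>((A, B), (a, b)).
     (if a then insert (Suc m) A else A, if b then insert (Suc (Suc m)) B else B))"

lemma finite_paths: "finite (paths m)"
proof (rule finite_subset)
  show "paths m \<subseteq> Pow {1..m} \<times> Pow {2..Suc m}"
    unfolding paths_def by auto
qed simp

lemma path_height_end:
  assumes "(A, B) \<in> paths m"
  shows "path_height A B m = int (card A) - int (card B)"
proof -
  have "{a\<in>A. a \<le> m} = A" "{b\<in>B. b \<le> Suc m} = B"
    using assms unfolding paths_def by auto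
  then show ?thesis
    unfolding path_height_def by simp
qed

lemma path_snoc_paths: "x \<in> paths m \<Longrightarrow> path_snoc m (x, ab) \<in> paths (Suc m)"
  unfolding paths_def path_snoc_def by (cases x; cases ab) auto

lemma path_height_snoc_before:
  assumes "k \<le> m"
  shows "path_height (if a then insert (Suc m) A else A) (if b then insert (Suc (Suc m)) B else B) k
    = path_height A B k"
proof -
  have "{x\<in>(if a then insert (Suc m) A else A). x \<le> k} = {x\<in>A. x \<le> k}"
    "{x\<in>(if b then insert (Suc (Suc m)) B else B). x \<le> Suc k} = {x\<in>B. x \<le> Suc k}"
    using assms by auto
  then show ?thesis
    unfolding path_height_def by simp
qed

lemma path_height_snoc_end:
  assumes "(A, B) \<in> paths m"
  shows "path_height (if a then insert (Suc m) A else A)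
      (if b then insert (Suc (Suc m)) B else B) (Suc m)
    = path_height A B m + (if a then 1 else 0) - (if b then 1 else 0)"
proof -
  have "path_snoc m ((A, B), (a, b)) \<in> paths (Suc m)"
    using path_snoc_paths[OF assms] .
  moreover have "finite A" "finite B" "Suc m \<notin> A" "Suc (Suc m) \<notin> B"
    using assms unfolding paths_def by (auto intro: finite_subset)
  ultimately show ?thesis
    unfolding path_height_end[OF assms] by (auto simp: path_snoc_def path_height_end)
qed


lemma prod_filter_atLeastAtMost_Suc:
  fixes g g' :: "nat \<Rightarrow> 'a::comm_monoid_mult"
  assumes "\<And>k. k \<le> m \<Longrightarrow> Q' k \<longleftrightarrow> Q k" and "\<And>k. k \<le> m \<Longrightarrow> g' k = g k"
  shows "(\<Prod>k | k \<in> {1..Suc m} \<and> Q' k. g' k)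
    = (if Q' (Suc m) then g' (Suc m) else 1) * (\<Prod>k | k \<in> {1..m} \<and> Q k. g k)"
proof -
  have "{k. k \<in> {1..Suc m} \<and> Q' k}
      = (if Q' (Suc m) then insert (Suc m) else id) {k. k \<in> {1..m} \<and> Q k}"
    using assms(1) by (auto simp: le_Suc_eq)
  moreover have "(\<Prod>k | k \<in> {1..m} \<and> Q k. g' k) = (\<Prod>k | k \<in> {1..m} \<and> Q k. g k)"
    using assms(2) by (intro prod.cong) auto
  ultimately show ?thesis
    by auto
qed

lemma path_weight_snoc:
  fixes a b :: bool and p q s y :: "'a::comm_semiring_1"
  assumes P: "(A, B) \<in> paths m"
  defines "A' \<equiv> if a then insert (Suc m) A else A"
    and "B' \<equiv> if b then insert (Suc (Suc m)) B else B"
  shows "path_weight p q s y (Suc m) A' B' = path_weight p q s y m A B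
     * (if \<not> a \<and> b then s else 1) * (if a then y else 1)
     * (if b then pq_int p q (nat (path_height A' B' (Suc m) + 1)) else 1)
     * (if \<not> a then pq_int p q (nat (path_height A B m + 1)) else 1)"
proof -
  have "finite A" "Suc m \<notin> A" "Suc (Suc m) \<notin> B"
    using P unfolding paths_def by (auto intro: finite_subset)
  then have new: "Suc m \<in> A' \<longleftrightarrow> a" "Suc (Suc m) \<in> B' \<longleftrightarrow> b"
    unfolding A'_def B'_def by auto
  have old: "k \<in> A' \<longleftrightarrow> k \<in> A" "Suc k \<in> B' \<longleftrightarrow> Suc k \<in> B" if "k \<le> m" for k
    using that unfolding A'_def B'_def by auto
  have height: "path_height A' B' k = path_height A B k" if "k \<le> m" for k
    unfolding A'_def B'_def using path_height_snoc_before[OF that] .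
  have "{k\<in>{1..Suc m}. k \<notin> A' \<and> Suc k \<in> B'}
      = (if \<not> a \<and> b then insert (Suc m) else id) {k\<in>{1..m}. k \<notin> A \<and> Suc k \<in> B}"
    using new by (auto simp: le_Suc_eq old)
  then have "card {k\<in>{1..Suc m}. k \<notin> A' \<and> Suc k \<in> B'}
      = card {k\<in>{1..m}. k \<notin> A \<and> Suc k \<in> B} + (if \<not> a \<and> b then 1 else 0)"
    by auto
  moreover have "card A' = card A + (if a then 1 else 0)"
    unfolding A'_def using \<open>finite A\<close> \<open>Suc m \<notin> A\<close> by auto
  moreover have "(\<Prod>k | k \<in> {1..Suc m} \<and> Suc k \<in> B'. pq_int p q (nat (path_height A' B' k + 1)))
      = (if b then pq_int p q (nat (path_height A' B' (Suc m) + 1)) else 1)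
        * (\<Prod>k | k \<in> {1..m} \<and> Suc k \<in> B. pq_int p q (nat (path_height A B k + 1)))"
    unfolding new(2)[symmetric] by (rule prod_filter_atLeastAtMost_Suc) (simp_all add: old height)
  moreover have "(\<Prod>k | k \<in> {1..Suc m} \<and> k \<notin> A'. pq_int p q (nat (path_height A' B' (k - 1) + 1)))
      = (if \<not> a then pq_int p q (nat (path_height A B m + 1)) else 1)
        * (\<Prod>k | k \<in> {1..m} \<and> k \<notin> A. pq_int p q (nat (path_height A B (k - 1) + 1)))"
    using prod_filter_atLeastAtMost_Suc[of m "\<lambda>k. k \<notin> A'" "\<lambda>k. k \<notin> A"
        "\<lambda>k. pq_int p q (nat (path_height A' B' (k - 1) + 1))"
        "\<lambda>k. pq_int p q (nat (path_height A B (k - 1) + 1))"]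
    by (simp add: old height new)
  ultimately show ?thesis
    unfolding path_weight_def by (simp add: power_add ac_simps)
qed

lemma bij_betw_path_snoc: "bij_betw (path_snoc m) (paths m \<times> UNIV) (paths (Suc m))"
proof (rule bij_betw_byWitness[where
      f' = "\<lambda>(A, B). ((A - {Suc m}, B - {Suc (Suc m)}), (Suc m \<in> A, Suc (Suc m) \<in> B))"])
  have "Suc m \<notin> A" "Suc (Suc m) \<notin> B" if "(A, B) \<in> paths m" for A B
    using that unfolding paths_def by auto
  then show "\<forall>x \<in> paths m \<times> UNIV. (\<lambda>(A, B). ((A - {Suc m}, B - {Suc (Suc m)}),
      (Suc m \<in> A, Suc (Suc m) \<in> B))) (path_snoc m x) = x"
    unfolding path_snoc_def by (auto split: if_splits)
  show "\<forall>z \<in> paths (Suc m). path_snoc m ((\<lambda>(A, B). ((A - {Suc m}, B - {Suc (Suc m)}),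
      (Suc m \<in> A, Suc (Suc m) \<in> B))) z) = z"
    unfolding path_snoc_def by (auto split: if_splits)
  show "path_snoc m ` (paths m \<times> UNIV) \<subseteq> paths (Suc m)"
    using path_snoc_paths by auto
  show "(\<lambda>(A, B). ((A - {Suc m}, B - {Suc (Suc m)}), (Suc m \<in> A, Suc (Suc m) \<in> B))) ` paths (Suc m)
      \<subseteq> paths m \<times> UNIV"
    unfolding paths_def by (auto simp: le_Suc_eq)
qed

lemma sum_path_snoc:
  fixes p q s y :: "'a::comm_semiring_1"
  assumes P: "(A, B) \<in> paths m"
  defines "h \<equiv> path_height A B m" and "w \<equiv> path_weight p q s y m A B"
  shows "(\<Sum>ab\<in>UNIV. case path_snoc m ((A, B), ab) of (A', B') \<Rightarrow>
            if path_height A' B' (Suc m) = D then path_weight p q s y (Suc m) A' B' else 0)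
    = (if h = D then (1 + y) * pq_int p q (nat (D + 1)) * w else 0)
      + (if h = D - 1 then y * w else 0)
      + (if h = D + 1 then s * pq_int p q (nat (D + 1)) * pq_int p q (nat (D + 2)) * w else 0)"
proof -
  have step: "(case path_snoc m ((A, B), (a, b)) of (A', B') \<Rightarrow>
        if path_height A' B' (Suc m) = D then path_weight p q s y (Suc m) A' B' else 0) =
      (if h + (if a then 1 else 0) - (if b then 1 else 0) = D then
        w * (if \<not> a \<and> b then s else 1) * (if a then y else 1)
        * (if b then pq_int p q (nat (h + (if a then 1 else 0) - (if b then 1 else 0) + 1)) else 1)
        * (if \<not> a then pq_int p q (nat (h + 1)) else 1) else 0)" for a b
    unfolding path_snoc_def prod.case
      path_weight_snoc[OF P] path_height_snoc_end[OF P] h_def w_def ..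
  have steps: "(UNIV :: (bool \<times> bool) set)
      = {(True, True), (True, False), (False, True), (False, False)}"
    by auto
  show ?thesis
    unfolding steps using step by (simp add: algebra_simps)
qed

lemma path_sum_Suc:
  fixes p q s y :: "'a::comm_semiring_1"
  shows "path_sum p q s y (Suc m) D =
      (1 + y) * pq_int p q (nat (D + 1)) * path_sum p q s y m D
    + y * path_sum p q s y m (D - 1)
    + s * pq_int p q (nat (D + 1)) * pq_int p q (nat (D + 2)) * path_sum p q s y m (D + 1)"
proof -
  let ?F = "\<lambda>(A', B'). if path_height A' B' (Suc m) = D then path_weight p q s y (Suc m) A' B'
      else 0"
  let ?h = "\<lambda>(A, B). path_height A B m" and ?w = "\<lambda>(A, B). path_weight p q s y m A B"
  have "path_sum p q s y (Suc m) D = (\<Sum>x\<in>paths m \<times> UNIV. ?F (path_snoc m x))"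
    unfolding path_sum_def by (rule sum.reindex_bij_betw[OF bij_betw_path_snoc, symmetric])
  also have "\<dots> = (\<Sum>x\<in>paths m. \<Sum>ab\<in>UNIV. ?F (path_snoc m (x, ab)))"
    by (subst sum.cartesian_product) simp
  also have "\<dots> = (\<Sum>x\<in>paths m.
        (if ?h x = D then (1 + y) * pq_int p q (nat (D + 1)) * ?w x else 0)
      + (if ?h x = D - 1 then y * ?w x else 0)
      + (if ?h x = D + 1 then s * pq_int p q (nat (D + 1))
        * pq_int p q (nat (D + 2)) * ?w x else 0))"
    by (rule sum.cong[OF refl]) (auto simp: sum_path_snoc)
  also have "\<dots> = (1 + y) * pq_int p q (nat (D + 1)) * path_sum p q s y m D
    + y * path_sum p q s y m (D - 1)
    + s * pq_int p q (nat (D + 1)) * pq_int p q (nat (D + 2)) * path_sum p q s y m (D + 1)"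
    unfolding path_sum_def sum.distrib sum_distrib_left
    by (intro arg_cong2[where f = "(+)"] sum.cong) (auto split: prod.splits)
  finally show ?thesis .
qed

lemma path_sum_eq_motzkin_sum:
  fixes p q s y :: "'a::comm_semiring_1"
  shows "path_sum p q s y m D = (if D < 0 then 0 else motzkin_sum p q s y m (nat D))"
proof (induction m arbitrary: D)
  case 0
  have "paths 0 = {({}, {})}"
    unfolding paths_def by auto
  then show ?case
    unfolding path_sum_def by (auto simp: path_height_def path_weight_def)
next
  case (Suc m)
  show ?case
  proof (cases "D < 0")
    case True
    then show ?thesis
      unfolding path_sum_Suc Suc.IH by simp
  next
    case False
    then obtain d where d: "D = int d"
      by (metis nonneg_int_cases not_less)
    have "nat (D + 1) = d + 1" "nat (D + 2) = d + 2"
      unfolding d by simp_all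
    moreover have "(if D - 1 < 0 then 0 else motzkin_sum p q s y m (nat (D - 1)))
        = (if 0 < d then motzkin_sum p q s y m (d - 1) else 0)"
      unfolding d by (cases d) auto
    ultimately show ?thesis
      unfolding path_sum_Suc Suc.IH using d by (simp add: algebra_simps)
  qed
qed

section \<open>The generating function as a Motzkin path sum\<close>

lemma card_compl_le:
  assumes "A \<subseteq> {1..n}" "k \<le> n"
  shows "card {x\<in>{1..n} - A. x \<le> k} = k - card {x\<in>A. x \<le> k}" and "card {x\<in>A. x \<le> k} \<le> k"
proof -
  have sub: "{x\<in>A. x \<le> k} \<subseteq> {1..k}"
    using assms by auto
  have "{x\<in>{1..n} - A. x \<le> k} = {1..k} - {x\<in>A. x \<le> k}"
    using assms by auto
  then show "card {x\<in>{1..n} - A. x \<le> k} = k - card {x\<in>A. x \<le> k}"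
    using card_Diff_subset[OF finite_subset[OF sub] sub] by simp
  show "card {x\<in>A. x \<le> k} \<le> k"
    using card_mono[OF _ sub] by simp
qed

lemma prod_open_arcs_upper:
  fixes p q :: "'a::comm_semiring_1"
  assumes "(A, B) \<in> paths m"
  shows "(\<Prod>v\<in>B. pq_int p q (open_arcs A B v))
    = (\<Prod>k | k \<in> {1..m} \<and> Suc k \<in> B. pq_int p q (nat (path_height A B k + 1)))"
proof -
  have B: "B \<subseteq> {2..Suc m}"
    using assms unfolding paths_def by auto
  have "B = Suc ` {k. k \<in> {1..m} \<and> Suc k \<in> B}"
  proof (rule set_eqI, rule iffI)
    fix c assume c: "c \<in> B"
    then have "c \<in> {2..Suc m}"
      using B by blast
    then have "c = Suc (c - 1)" "c - 1 \<in> {1..m}"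
      by auto
    with c show "c \<in> Suc ` {k. k \<in> {1..m} \<and> Suc k \<in> B}"
      by (metis (mono_tags, lifting) image_eqI mem_Collect_eq)
  qed auto
  then have "(\<Prod>v\<in>B. pq_int p q (open_arcs A B v))
      = (\<Prod>k | k \<in> {1..m} \<and> Suc k \<in> B. pq_int p q (open_arcs A B (Suc k)))"
    by (metis (no_types, lifting) inj_Suc inj_on_subset
      prod.reindex subset_UNIV comp_apply prod.cong)
  also have "\<dots> = (\<Prod>k | k \<in> {1..m} \<and> Suc k \<in> B. pq_int p q (nat (path_height A B k + 1)))"
  proof (rule prod.cong[OF refl])
    fix k assume k: "k \<in> {k. k \<in> {1..m} \<and> Suc k \<in> B}"
    have "finite B" using B by (rule finite_subset) simp
    moreover have "{b\<in>B. b \<le> Suc k} = insert (Suc k) {b\<in>B. b < Suc k}"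
      using k by auto
    ultimately have "card {b\<in>B. b \<le> Suc k} = Suc (card {b\<in>B. b < Suc k})"
      by simp
    moreover have "{a\<in>A. a < Suc k} = {a\<in>A. a \<le> k}"
      by auto
    ultimately show "pq_int p q (open_arcs A B (Suc k)) = pq_int p q (nat (path_height A B k + 1))"
      unfolding open_arcs_def path_height_def by (simp add: nat_diff_distrib')
  qed
  finally show ?thesis .
qed


lemma open_arcs_lower:
  assumes P: "(A, B) \<in> paths m" and j: "j \<in> {1..Suc m}"
  shows "open_arcs ({1..Suc m} - B) (Suc ` ({1..Suc m} - A)) (Suc j)
    = nat (path_height A B (j - 1) + 1)"
proof -
  have A: "A \<subseteq> {1..Suc m}" and B: "B \<subseteq> {1..Suc m}"
    using P unfolding paths_def by auto
  have closers: "card {t\<in>{1..Suc m} - B. t < Suc j} = j - card {b\<in>B. b \<le> j}"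
    using card_compl_le(1)[OF B, of j] j by (simp add: less_Suc_eq_le)
  have "{v\<in>Suc ` ({1..Suc m} - A). v < Suc j} = Suc ` {x\<in>{1..Suc m} - A. x \<le> j - 1}"
    using j by auto
  moreover have "j - 1 \<le> Suc m"
    using j by auto
  ultimately have openers:
    "card {v\<in>Suc ` ({1..Suc m} - A). v < Suc j} = (j - 1) - card {a\<in>A. a \<le> j - 1}"
    using card_compl_le(1)[OF A] by (simp add: card_image)
  define a b where "a = card {a\<in>A. a \<le> j - 1}" and "b = card {b\<in>B. b \<le> j}"
  have "b \<le> j" "a \<le> j - 1" "1 \<le> j"
    using card_compl_le(2)[OF B, of j] card_compl_le(2)[OF A, of "j - 1"] j
    unfolding a_def b_def by auto
  then have "(j - b) - ((j - 1) - a) = nat (int a - int b + 1)"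
    by (cases "b \<le> a") (auto simp: nat_diff_distrib)
  moreover have "Suc (j - 1) = j"
    using j by simp
  ultimately show ?thesis
    unfolding open_arcs_def closers openers path_height_def a_def b_def by simp
qed


lemma prod_open_arcs_lower:
  fixes p q :: "'a::comm_semiring_1"
  assumes P: "(A, B) \<in> paths m" and balanced: "card A = card B"
  shows "(\<Prod>v\<in>Suc ` ({1..Suc m} - A).
      pq_int p q (open_arcs ({1..Suc m} - B) (Suc ` ({1..Suc m} - A)) v))
    = (\<Prod>k | k \<in> {1..m} \<and> k \<notin> A. pq_int p q (nat (path_height A B (k - 1) + 1)))"
proof -
  have "(\<Prod>v\<in>Suc ` ({1..Suc m} - A).
        pq_int p q (open_arcs ({1..Suc m} - B) (Suc ` ({1..Suc m} - A)) v))
      = (\<Prod>j\<in>{1..Suc m} - A. pq_int p q (nat (path_height A B (j - 1) + 1)))"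
  proof (subst prod.reindex)
    show "prod ((\<lambda>v. pq_int p q (open_arcs ({1..Suc m} - B) (Suc ` ({1..Suc m} - A)) v)) \<circ> Suc)
        ({1..Suc m} - A) = (\<Prod>j\<in>{1..Suc m} - A. pq_int p q (nat (path_height A B (j - 1) + 1)))"
    proof (rule prod.cong[OF refl])
      fix j assume "j \<in> {1..Suc m} - A"
      then show "((\<lambda>v. pq_int p q (open_arcs ({1..Suc m} - B) (Suc ` ({1..Suc m} - A)) v)) \<circ> Suc) j
          = pq_int p q (nat (path_height A B (j - 1) + 1))"
        using open_arcs_lower[OF P, of j] by simp
    qed
  qed simp
  also have "\<dots> = pq_int p q (nat (path_height A B m + 1))
        * (\<Prod>k | k \<in> {1..m} \<and> k \<notin> A. pq_int p q (nat (path_height A B (k - 1) + 1)))"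
  proof -
    have "{1..Suc m} - A = insert (Suc m) {k. k \<in> {1..m} \<and> k \<notin> A}"
      using P unfolding paths_def by auto
    then show ?thesis
      by (simp only:) (subst prod.insert, auto)
  qed
  also have "pq_int p q (nat (path_height A B m + 1)) = 1"
    using path_height_end[OF P] balanced by (simp add: pq_int_def)
  finally show ?thesis
    by simp
qed

lemma sum_exc_fiber_eq_path_weight:
  fixes p q s y :: "'a::comm_semiring_1"
  assumes P: "(A, B) \<in> paths m"
  shows "(\<Sum>\<sigma> | \<sigma> \<in> Sym (Suc m) \<and> exc_pos (Suc m) \<sigma> = A \<and> exc_val (Suc m) \<sigma> = B.
            p ^ nest (Suc m) \<sigma> * q ^ cros (Suc m) \<sigma> * s ^ cpk_star (Suc m) \<sigma> * y ^ exc (Suc m) \<sigma>)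
    = (if path_height A B m = 0 then path_weight p q s y m A B else 0)"
proof (cases "card A = card B")
  case True
  have A: "A \<subseteq> {1..Suc m}" and B: "B \<subseteq> {1..Suc m}"
    using P unfolding paths_def by auto
  then have "finite A" "finite B"
    by (auto intro: finite_subset)
  have "card ({1..Suc m} - B) = card (Suc ` ({1..Suc m} - A))"
    using True A B \<open>finite A\<close> \<open>finite B\<close> by (simp add: card_Diff_subset card_image)
  then have "(\<Sum>g\<in>arc_maps ({1..Suc m} - B) (Suc ` ({1..Suc m} - A)).
        p ^ arc_nest ({1..Suc m} - B) g * q ^ arc_cros ({1..Suc m} - B) g)
      = (\<Prod>v\<in>Suc ` ({1..Suc m} - A).
          pq_int p q (open_arcs ({1..Suc m} - B) (Suc ` ({1..Suc m} - A)) v))"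
    by (intro sum_arc_maps) auto
  then show ?thesis
    unfolding sum_exc_fiber_eq_arc_sums[OF A B] sum_arc_maps[OF \<open>finite A\<close> \<open>finite B\<close> True]
      prod_open_arcs_upper[OF P] prod_open_arcs_lower[OF P True]
    using path_height_end[OF P] True by (simp add: path_weight_def)
next
  case False
  have "card (exc_val (Suc m) \<sigma>) = card (exc_pos (Suc m) \<sigma>)" if "\<sigma> \<in> Sym (Suc m)" for \<sigma>
    using that unfolding exc_val_def Sym_def
    by (intro card_image) (auto intro: inj_on_subset[OF permutes_inj_on])
  then have empty: "{\<sigma>. \<sigma> \<in> Sym (Suc m) \<and> exc_pos (Suc m) \<sigma> = A \<and> exc_val (Suc m) \<sigma> = B} = {}"
    using False by auto
  have "path_height A B m \<noteq> 0"
    using path_height_end[OF P] False by simp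
  then show ?thesis
    unfolding empty by (simp only: sum.empty if_False)
qed

lemma sum_perms_eq_path_sum:
  fixes p q s y :: "'a::comm_semiring_1"
  shows "(\<Sum>\<sigma>\<in>Sym (Suc m). p ^ nest (Suc m) \<sigma> * q ^ cros (Suc m) \<sigma>
      * s ^ cpk_star (Suc m) \<sigma> * y ^ exc (Suc m) \<sigma>)
    = path_sum p q s y m 0"
proof -
  let ?E = "\<lambda>\<sigma>. (exc_pos (Suc m) \<sigma>, exc_val (Suc m) \<sigma>)"
  let ?w = "\<lambda>\<sigma>. p ^ nest (Suc m) \<sigma> * q ^ cros (Suc m) \<sigma>
      * s ^ cpk_star (Suc m) \<sigma> * y ^ exc (Suc m) \<sigma>"
  have "?E \<sigma> \<in> paths m" if "\<sigma> \<in> Sym (Suc m)" for \<sigma>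
  proof -
    have range: "\<sigma> i \<in> {1..Suc m} \<longleftrightarrow> i \<in> {1..Suc m}" for i
      using that permutes_in_image[of \<sigma> "{1..Suc m}" i] unfolding Sym_def by simp
    have "i \<in> {1..m}" "\<sigma> i \<in> {2..Suc m}" if "i \<in> exc_pos (Suc m) \<sigma>" for i
      using that range[of i] unfolding exc_pos_def by auto
    then have "exc_pos (Suc m) \<sigma> \<subseteq> {1..m}" "exc_val (Suc m) \<sigma> \<subseteq> {2..Suc m}"
      unfolding exc_val_def by blast+
    then show ?thesis
      unfolding paths_def by simp
  qed
  moreover have "finite (Sym (Suc m))"
    unfolding Sym_def by (rule finite_permutations) simp
  ultimately have "(\<Sum>\<sigma>\<in>Sym (Suc m). ?w \<sigma>) = (\<Sum>AB\<in>paths m. \<Sum>\<sigma> | \<sigma> \<in> Sym (Suc m) \<and> ?E \<sigma> = AB. ?w \<sigma>)"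
    by (intro sum.group[symmetric] finite_paths) auto
  also have "\<dots> = path_sum p q s y m 0"
    unfolding path_sum_def
  proof (rule sum.cong[OF refl])
    fix AB assume "AB \<in> paths m"
    then obtain A B where "AB = (A, B)" "(A, B) \<in> paths m"
      by (metis prod.collapse)
    then show "(\<Sum>\<sigma> | \<sigma> \<in> Sym (Suc m) \<and> ?E \<sigma> = AB. ?w \<sigma>)
        = (case AB of (A, B) \<Rightarrow> if path_height A B m = 0 then path_weight p q s y m A B else 0)"
      using sum_exc_fiber_eq_path_weight[of A B m p q s y] by simp
  qed
  finally show ?thesis .
qed

lemma P_nest_cros_cpk_exc_eq_motzkin_sum:
  "P_nest_cros_cpk_exc (Suc m) p q s y = motzkin_sum p q s y m 0"
  unfolding P_nest_cros_cpk_exc_def sum_perms_eq_path_sum path_sum_eq_motzkin_sum by simp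

lemma A_poly_eq_motzkin_sum: "A_poly (Suc m) p q t = motzkin_sum p q 1 t m 0"
  unfolding A_poly_def P_nest_cros_cpk_exc_eq_motzkin_sum[symmetric] P_nest_cros_cpk_exc_def
  by simp

lemma substitution_rescales:
  fixes t x :: "'a::field"
  assumes "1 + x \<noteq> 0" "x + t \<noteq> 0" "1 + x * t \<noteq> 0"
  defines "r \<equiv> (1 + x) / (1 + x * t)"
  shows "(1 + x)\<^sup>2 * t / ((x + t) * (1 + x * t)) * ((x + t) / (1 + x * t)) = r\<^sup>2 * t"
    and "1 + (x + t) / (1 + x * t) = r * (1 + t)"
    and "(1 + x * t) / (1 + x) * r = 1"
proof -
  have "(1 + x)\<^sup>2 * t / ((x + t) * (1 + x * t)) * ((x + t) / (1 + x * t))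
      = (x + t) * ((1 + x)\<^sup>2 * t) / ((x + t) * (1 + x * t)\<^sup>2)"
    by (simp add: power2_eq_square ac_simps)
  also have "\<dots> = (1 + x)\<^sup>2 * t / (1 + x * t)\<^sup>2"
    using assms(2) by (rule mult_divide_mult_cancel_left)
  finally show "(1 + x)\<^sup>2 * t / ((x + t) * (1 + x * t)) * ((x + t) / (1 + x * t)) = r\<^sup>2 * t"
    unfolding r_def by (simp add: power_divide)
  show "1 + (x + t) / (1 + x * t) = r * (1 + t)"
    unfolding r_def using assms by (simp add: field_simps)
  show "(1 + x * t) / (1 + x) * r = 1"
    unfolding r_def using assms by simp
qed

theorem theorem3p1:
  fixes n :: nat and p q t x :: "'a::field"
  assumes "n \<ge> 1"
    and "1 + x \<noteq> 0" and "x + t \<noteq> 0" and "1 + x * t \<noteq> 0"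
  shows "A_poly n p q t =
    ((1 + x * t) / (1 + x)) ^ (n - 1) *
    P_nest_cros_cpk_exc n p q ((1 + x)\<^sup>2 * t / ((x + t) * (1 + x * t))) ((x + t) / (1 + x * t))"
proof -
  obtain m where n: "n = Suc m"
    using assms(1) by (cases n) auto
  define r where "r = (1 + x) / (1 + x * t)"
  note rescale = substitution_rescales[OF assms(2-4), folded r_def]
  have "P_nest_cros_cpk_exc n p q ((1 + x)\<^sup>2 * t / ((x + t) * (1 + x * t))) ((x + t) / (1 + x * t))
      = r ^ m * A_poly n p q t"
    using motzkin_sum_rescale[OF rescale(1,2), of 0 p q m]
    unfolding n P_nest_cros_cpk_exc_eq_motzkin_sum A_poly_eq_motzkin_sum by simp
  moreover have "((1 + x * t) / (1 + x)) ^ m * r ^ m = 1"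
    using rescale(3) by (simp flip: power_mult_distrib)
  ultimately show ?thesis
    unfolding n by (simp add: mult.assoc[symmetric])
qed

end
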